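(* For integers $m\ge1$ and $k\ge0$, $$\mu(N|_m,k,J)=\mu(P|_m,k,L)\qquad\text{and}\qquad \mu(P|_m,k,J^{*})=\mu(Q|_m,k,J^{*}).$$
   Context: Let $N=\{0,1,2,\ldots\}$, $J=\{(2n+1)2^{2k}-1 : n,k\in N\}$, $J^{*}=\{(2n+1)2^{2k}-1 : n,k\in N,\ k>0\}$, $K=N\setminus J$, $L=N\setminus J^{*}$, $P=\{k\in N: k\equiv0,3\pmod 4\}$, $Q=\{k\in N: k\equiv 1,2\pmod 4\}$. For an infinite set $A\subseteq N$, $A|_m$ denotes the set of the $m$ smallest elements of $A$. An involution on a finite set $A$ is a permutation $\sigma$ of $A$ with $\sigma=\sigma^{-1}$; its cycles are fixed points and transpositions $(c,d)$. A transposition $(c,d)$ is said to be in a set $B$ if $c+d\in B$. For a finite set $A\subseteq N$, an integer $k\ge0$ and a set $B\subseteq N$, $\mu(A,k,B)$ denotes the number of involutions of $A$ having exactly $k$ transpositions, all of which are in $B$. *)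

theory Defs
  imports "HOL-Combinatorics.Permutations"
begin

definition Jset :: "nat set" where
  "Jset = {x. \<exists>n k. x = (2*n+1) * 2^(2*k) - 1}"

definition Jstar :: "nat set" where
  "Jstar = {x. \<exists>n k. k > 0 \<and> x = (2*n+1) * 2^(2*k) - 1}"

definition Kset :: "nat set" where
  "Kset = UNIV - Jset"

definition Lset :: "nat set" where
  "Lset = UNIV - Jstar"

definition Pset :: "nat set" where
  "Pset = {k. k mod 4 = 0 \<or> k mod 4 = 3}"

definition Qset :: "nat set" where
  "Qset = {k. k mod 4 = 1 \<or> k mod 4 = 2}"

text \<open>A|_m: the set of the m smallest elements of A (A infinite).\<close>
definition first_m :: "nat set \<Rightarrow> nat \<Rightarrow> nat set" where
  "first_m A m = {x \<in> A. card {y \<in> A. y < x} < m}"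

definition involution_on :: "(nat \<Rightarrow> nat) \<Rightarrow> nat set \<Rightarrow> bool" where
  "involution_on \<sigma> A \<longleftrightarrow> \<sigma> permutes A \<and> (\<forall>x. \<sigma> (\<sigma> x) = x)"

definition transpositions :: "(nat \<Rightarrow> nat) \<Rightarrow> nat set \<Rightarrow> nat set set" where
  "transpositions \<sigma> A = {{c, \<sigma> c} | c. c \<in> A \<and> \<sigma> c \<noteq> c}"

definition mu :: "nat set \<Rightarrow> nat \<Rightarrow> nat set \<Rightarrow> nat" where
  "mu A k B = card {\<sigma>. involution_on \<sigma> A \<and> card (transpositions \<sigma> A) = k \<and>
      (\<forall>c \<in> A. \<sigma> c \<noteq> c \<longrightarrow> c + \<sigma> c \<in> B)}"

end

theory Submission
  imports Defs
begin

text \<open>Enumerate \<open>P\<close> and \<open>Q\<close> increasingly as \<open>p\<^sub>i\<close> and \<open>q\<^sub>i\<close>. Both \<open>p\<^sub>a + p\<^sub>b\<close> and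
  \<open>q\<^sub>a + q\<^sub>b\<close> equal \<open>2(a + b) + 1\<close> when \<open>a + b\<close> is odd and are even otherwise, so the
  bijections \<open>i \<mapsto> p\<^sub>i\<close> and \<open>i \<mapsto> q\<^sub>i\<close> carry involutions of \<open>{0..<m}\<close> onto involutions of
  \<open>P|\<^sub>m\<close> and \<open>Q|\<^sub>m\<close>, translating the condition on the sums of the transpositions.
  Writing \<open>s + 1 = (2a + 1) 2\<^sup>i\<close>, membership \<open>s \<in> J\<close> says that \<open>i\<close> is even and
  \<open>2s + 1 \<in> J\<^sup>*\<close> says that \<open>i + 1\<close> is even; hence \<open>s \<in> J\<close> iff \<open>2s + 1 \<in> L\<close>, and even numbers lie
  in \<open>J\<close> and in \<open>L\<close>. This gives \<open>\<mu>(N|\<^sub>m,k,J) = \<mu>(P|\<^sub>m,k,L)\<close>, while \<open>\<mu>(P|\<^sub>m,k,J\<^sup>*)\<close> and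
  \<open>\<mu>(Q|\<^sub>m,k,J\<^sup>*)\<close> both equal \<open>\<mu>(N|\<^sub>m,k,{s. s odd, 2s + 1 \<in> J\<^sup>*})\<close>.\<close>

lemma ex_odd_times_power_two:
  fixes y :: nat
  assumes "y > 0"
  obtains a i where "y = (2*a+1) * 2^i"
  using assms
proof (induction y arbitrary: thesis rule: less_induct)
  case (less y)
  show ?case
  proof (cases "even y")
    case True
    then obtain z where z: "y = 2*z" by blast
    with less.prems have "z < y" "z > 0" by auto
    then obtain a i where "z = (2*a+1) * 2^i" using less.IH by blast
    with z have "y = (2*a+1) * 2^Suc i" by simp
    then show ?thesis by (rule less.prems(1))
  next
    case False
    then obtain a where "y = (2*a+1) * 2^0" using oddE by fastforce
    then show ?thesis by (rule less.prems(1))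
  qed
qed

lemma odd_times_power_two_neq:
  assumes "i < j"
  shows "(2*a+1) * 2^i \<noteq> (2*b+1) * (2::nat)^j"
proof
  assume eq: "(2*a+1) * 2^i = (2*b+1) * (2::nat)^j"
  have "(2::nat)^j = 2^(j-i) * 2^i"
    using assms by (simp flip: power_add)
  then have "(2*b+1) * (2::nat)^j = (2*b+1) * 2^(j-i) * 2^i"
    by (simp only: mult.assoc)
  with eq have "(2*a+1) * 2^i = ((2*b+1) * 2^(j-i)) * (2::nat)^i" by (simp only:)
  then have "2*a+1 = (2*b+1) * (2::nat)^(j-i)" by (simp only: mult_cancel_right) simp
  moreover have "even ((2*b+1) * (2::nat)^(j-i))" using assms by simp
  ultimately have "even (2*a+1)" by (simp only:)
  then show False by simp
qed

lemma odd_times_power_two_exponent_unique: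
  "(2*a+1) * 2^i = (2*b+1) * (2::nat)^j \<Longrightarrow> i = j"
  by (metis linorder_neqE_nat odd_times_power_two_neq)

lemma eq_odd_times_power_minus_one_iff:
  "x = (2*n+1) * 2^i - 1 \<longleftrightarrow> Suc x = (2*n+1) * (2::nat)^i"
proof -
  have "(2*n+1) * 2^i > (0::nat)" by simp
  then show ?thesis by linarith
qed

lemma in_Jset_iff: "x \<in> Jset \<longleftrightarrow> (\<exists>n k. Suc x = (2*n+1) * 2^(2*k))"
  by (simp only: Jset_def mem_Collect_eq eq_odd_times_power_minus_one_iff)

lemma in_Jstar_iff: "x \<in> Jstar \<longleftrightarrow> (\<exists>n k. k > 0 \<and> Suc x = (2*n+1) * 2^(2*k))"
  by (simp only: Jstar_def mem_Collect_eq eq_odd_times_power_minus_one_iff)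

lemma Jset_iff_even_exponent:
  assumes x: "Suc x = (2*n+1) * 2^i"
  shows "x \<in> Jset \<longleftrightarrow> even i"
proof
  assume "x \<in> Jset"
  then obtain n' k where "Suc x = (2*n'+1) * 2^(2*k)" unfolding in_Jset_iff by blast
  with x have "i = 2*k" by (metis odd_times_power_two_exponent_unique)
  then show "even i" by simp
next
  assume "even i"
  then obtain k where "i = 2*k" by blast
  with x show "x \<in> Jset" unfolding in_Jset_iff by blast
qed

lemma Jstar_iff_even_positive_exponent:
  assumes x: "Suc x = (2*n+1) * 2^i"
  shows "x \<in> Jstar \<longleftrightarrow> even i \<and> i > 0"
proof
  assume "x \<in> Jstar"
  then obtain n' k where "k > 0" "Suc x = (2*n'+1) * 2^(2*k)" unfolding in_Jstar_iff by blast
  with x have "i = 2*k" "k > 0" by (metis odd_times_power_two_exponent_unique)+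
  then show "even i \<and> i > 0" by simp
next
  assume "even i \<and> i > 0"
  then obtain k where "i = 2*k" "k > 0" by auto
  with x show "x \<in> Jstar" unfolding in_Jstar_iff by blast
qed

lemma even_in_Jset_notin_Jstar:
  assumes "even x"
  shows "x \<in> Jset" "x \<notin> Jstar"
proof -
  from assms have x: "Suc x = (2*(x div 2)+1) * 2^0" by simp
  show "x \<in> Jset" using Jset_iff_even_exponent[OF x] by simp
  show "x \<notin> Jstar" using Jstar_iff_even_positive_exponent[OF x] by simp
qed

lemma in_Jset_iff_double_notin_Jstar: "s \<in> Jset \<longleftrightarrow> 2*s+1 \<notin> Jstar"
proof -
  obtain a i where s: "Suc s = (2*a+1) * 2^i"
    using ex_odd_times_power_two[of "Suc s"] by blast
  then have "Suc (2*s+1) = (2*a+1) * 2^Suc i" by simp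
  from Jset_iff_even_exponent[OF s] Jstar_iff_even_positive_exponent[OF this]
  show ?thesis by simp
qed

lemma involution_permutes:
  assumes "\<And>x. g (g x) = x" and "\<And>x. x \<notin> S \<Longrightarrow> g x = x"
  shows "g permutes S"
  unfolding permutes_def by (metis assms)

definition transfer_perm :: "(nat \<Rightarrow> nat) \<Rightarrow> nat set \<Rightarrow> (nat \<Rightarrow> nat) \<Rightarrow> nat \<Rightarrow> nat" where
  "transfer_perm f A \<sigma> x = (if x \<in> f ` A then f (\<sigma> (inv_into A f x)) else x)"

lemma transfer_perm_apply: "inj_on f A \<Longrightarrow> a \<in> A \<Longrightarrow> transfer_perm f A \<sigma> (f a) = f (\<sigma> a)"
  by (simp add: transfer_perm_def)

lemma transfer_perm_outside: "x \<notin> f ` A \<Longrightarrow> transfer_perm f A \<sigma> x = x"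
  by (simp add: transfer_perm_def)

lemma involution_on_transfer_perm:
  assumes inj: "inj_on f A" and \<sigma>: "involution_on \<sigma> A"
  shows "involution_on (transfer_perm f A \<sigma>) (f ` A)"
proof -
  have "\<sigma> a \<in> A" "\<sigma> (\<sigma> a) = a" if "a \<in> A" for a
    using \<sigma> that by (auto simp: involution_on_def permutes_in_image)
  then have "transfer_perm f A \<sigma> (transfer_perm f A \<sigma> x) = x" for x
    using inj by (cases "x \<in> f ` A") (auto simp: transfer_perm_apply transfer_perm_outside)
  then show ?thesis
    unfolding involution_on_def by (auto intro: involution_permutes transfer_perm_outside)
qed

lemma transpositions_transfer_perm:
  assumes inj: "inj_on f A" and \<sigma>: "\<sigma> permutes A"
  shows "transpositions (transfer_perm f A \<sigma>) (f ` A) = image f ` transpositions \<sigma> A"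
proof -
  have moved: "f (\<sigma> a) \<noteq> f a \<longleftrightarrow> \<sigma> a \<noteq> a" if "a \<in> A" for a
    using inj \<sigma> that by (simp add: inj_on_eq_iff permutes_in_image)
  have "transpositions (transfer_perm f A \<sigma>) (f ` A) = {{f a, f (\<sigma> a)} | a. a \<in> A \<and> \<sigma> a \<noteq> a}"
    unfolding transpositions_def using inj moved by (force simp: transfer_perm_apply)
  also have "\<dots> = image f ` transpositions \<sigma> A"
    unfolding transpositions_def by blast
  finally show ?thesis .
qed

lemma card_transpositions_transfer_perm:
  assumes inj: "inj_on f A" and \<sigma>: "\<sigma> permutes A"
  shows "card (transpositions (transfer_perm f A \<sigma>) (f ` A)) = card (transpositions \<sigma> A)"
proof -
  have "transpositions \<sigma> A \<subseteq> Pow A"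
    using \<sigma> by (auto simp: transpositions_def permutes_in_image)
  then have "inj_on (image f) (transpositions \<sigma> A)"
    using inj_on_image_Pow[OF inj] inj_on_subset by blast
  then show ?thesis
    by (simp add: transpositions_transfer_perm[OF assms] card_image)
qed

lemma inj_on_transfer_perm:
  assumes inj: "inj_on f A"
  shows "inj_on (transfer_perm f A) {\<sigma>. \<sigma> permutes A}"
proof (rule inj_onI, rule ext)
  fix \<sigma> \<tau> x
  assume \<sigma>: "\<sigma> \<in> {\<sigma>. \<sigma> permutes A}" and \<tau>: "\<tau> \<in> {\<sigma>. \<sigma> permutes A}"
    and eq: "transfer_perm f A \<sigma> = transfer_perm f A \<tau>"
  show "\<sigma> x = \<tau> x"
  proof (cases "x \<in> A")
    case True
    then have "f (\<sigma> x) = f (\<tau> x)"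
      using eq inj by (metis transfer_perm_apply)
    then show ?thesis
      using inj True \<sigma> \<tau> by (simp add: inj_on_eq_iff permutes_in_image)
  next
    case False
    then show ?thesis using \<sigma> \<tau> by (simp add: permutes_not_in)
  qed
qed

lemma mu_image_le:
  assumes fin: "finite A" and inj: "inj_on f A"
    and sums: "\<And>a b. a \<in> A \<Longrightarrow> b \<in> A \<Longrightarrow> a \<noteq> b \<Longrightarrow> a + b \<in> X \<Longrightarrow> f a + f b \<in> Y"
  shows "mu A k X \<le> mu (f ` A) k Y"
proof -
  let ?S = "\<lambda>A X. {\<sigma>. involution_on \<sigma> A \<and> card (transpositions \<sigma> A) = k \<and>
      (\<forall>c \<in> A. \<sigma> c \<noteq> c \<longrightarrow> c + \<sigma> c \<in> X)}"
  have "transfer_perm f A \<sigma> \<in> ?S (f ` A) Y" if \<sigma>: "\<sigma> \<in> ?S A X" for \<sigma>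
  proof -
    have perm: "\<sigma> permutes A" using \<sigma> by (simp add: involution_on_def)
    have "c + transfer_perm f A \<sigma> c \<in> Y"
      if "c \<in> f ` A" and "transfer_perm f A \<sigma> c \<noteq> c" for c
    proof -
      obtain a where a: "a \<in> A" "c = f a" using \<open>c \<in> f ` A\<close> by blast
      with that inj have "\<sigma> a \<noteq> a" by (auto simp: transfer_perm_apply)
      with \<sigma> a have "a + \<sigma> a \<in> X" by blast
      with a \<open>\<sigma> a \<noteq> a\<close> perm have "f a + f (\<sigma> a) \<in> Y"
        by (intro sums) (auto simp: permutes_in_image)
      with a inj show ?thesis by (simp add: transfer_perm_apply)
    qed
    then show ?thesis
      using \<sigma> inj perm
      by (simp add: involution_on_transfer_perm card_transpositions_transfer_perm)
  qed
  moreover have "finite (?S (f ` A) Y)"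
    using fin by (auto intro: finite_subset[OF _ finite_permutations[of "f ` A"]]
        simp: involution_on_def)
  moreover have "inj_on (transfer_perm f A) (?S A X)"
    using inj_on_transfer_perm[OF inj] by (rule inj_on_subset) (auto simp: involution_on_def)
  ultimately show ?thesis
    unfolding mu_def by (intro card_inj_on_le) auto
qed

lemma mu_image_eq:
  assumes fin: "finite A" and inj: "inj_on f A"
    and sums: "\<And>a b. a \<in> A \<Longrightarrow> b \<in> A \<Longrightarrow> a \<noteq> b \<Longrightarrow> a + b \<in> X \<longleftrightarrow> f a + f b \<in> Y"
  shows "mu A k X = mu (f ` A) k Y"
proof (rule antisym)
  show "mu A k X \<le> mu (f ` A) k Y"
    using mu_image_le[OF fin inj] sums by blast
  let ?g = "inv_into A f"
  have "mu (f ` A) k Y \<le> mu (?g ` f ` A) k X"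
  proof (rule mu_image_le)
    fix c d assume "c \<in> f ` A" "d \<in> f ` A" "c \<noteq> d" "c + d \<in> Y"
    then obtain a b where "a \<in> A" "b \<in> A" "c = f a" "d = f b" "a \<noteq> b" "f a + f b \<in> Y"
      by blast
    then show "?g c + ?g d \<in> X"
      using sums inj by (simp add: inv_into_f_f)
  qed (use fin inj in \<open>auto simp: inj_on_inv_into\<close>)
  then show "mu (f ` A) k Y \<le> mu A k X"
    using inj by (simp add: inv_into_image_cancel)
qed

lemma first_m_range_strict_mono:
  assumes "strict_mono h"
  shows "first_m (range h) m = h ` {..<m}"
proof -
  have "card {y \<in> range h. y < h i} = i" for i
  proof -
    have "{y \<in> range h. y < h i} = h ` {..<i}"
      using assms by (auto simp: strict_mono_less)
    then show ?thesis
      using strict_mono_imp_inj_on[OF assms] by (simp add: card_image inj_on_subset)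
  qed
  then show ?thesis unfolding first_m_def by auto
qed

lemma range_eq_residues_mod_4:
  fixes f :: "nat \<Rightarrow> nat"
  assumes f_even: "\<And>q. f (2*q) = 4*q + r" and f_odd: "\<And>q. f (2*q + 1) = 4*q + s"
    and "r < 4" "s < 4"
  shows "range f = {x. x mod 4 = r \<or> x mod 4 = s}"
proof (intro set_eqI iffI)
  fix x assume "x \<in> range f"
  then obtain i where "x = f i" by blast
  then show "x \<in> {x. x mod 4 = r \<or> x mod 4 = s}"
    using assms by (cases "even i") (auto elim!: evenE oddE)
next
  fix x assume "x \<in> {x. x mod 4 = r \<or> x mod 4 = s}"
  then have "x = f (2*(x div 4)) \<or> x = f (2*(x div 4) + 1)"
    using mult_div_mod_eq[of 4 x] f_even[of "x div 4"] f_odd[of "x div 4"] by auto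
  then show "x \<in> range f" by blast
qed

definition Pset_nth :: "nat \<Rightarrow> nat" where
  "Pset_nth i = (if even i then 2*i else 2*i + 1)"

definition Qset_nth :: "nat \<Rightarrow> nat" where
  "Qset_nth i = (if even i then 2*i + 1 else 2*i)"

lemma strict_mono_Pset_nth: "strict_mono Pset_nth"
  by (simp add: strict_mono_Suc_iff Pset_nth_def)

lemma strict_mono_Qset_nth: "strict_mono Qset_nth"
  by (simp add: strict_mono_Suc_iff Qset_nth_def)

lemma Pset_eq_range: "Pset = range Pset_nth"
  unfolding Pset_def by (rule range_eq_residues_mod_4[symmetric]) (simp_all add: Pset_nth_def)

lemma Qset_eq_range: "Qset = range Qset_nth"
  unfolding Qset_def by (rule range_eq_residues_mod_4[symmetric]) (simp_all add: Qset_nth_def)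

lemma Pset_nth_add_odd: "odd (a + b) \<Longrightarrow> Pset_nth a + Pset_nth b = 2*(a + b) + 1"
  by (auto simp: Pset_nth_def)

lemma Pset_nth_add_even: "even (a + b) \<Longrightarrow> even (Pset_nth a + Pset_nth b)"
  by (auto simp: Pset_nth_def)

lemma Qset_nth_add_odd: "odd (a + b) \<Longrightarrow> Qset_nth a + Qset_nth b = 2*(a + b) + 1"
  by (auto simp: Qset_nth_def)

lemma Qset_nth_add_even: "even (a + b) \<Longrightarrow> even (Qset_nth a + Qset_nth b)"
  by (auto simp: Qset_nth_def)

context
  fixes f :: "nat \<Rightarrow> nat" and a b :: nat
  assumes add_odd: "odd (a + b) \<Longrightarrow> f a + f b = 2*(a + b) + 1"
    and add_even: "even (a + b) \<Longrightarrow> even (f a + f b)"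
begin

lemma add_in_Jset_iff_image_add_in_Lset: "a + b \<in> Jset \<longleftrightarrow> f a + f b \<in> Lset"
proof (cases "even (a + b)")
  case True
  then show ?thesis using add_even even_in_Jset_notin_Jstar by (simp add: Lset_def)
next
  case False
  then show ?thesis using add_odd in_Jset_iff_double_notin_Jstar by (simp add: Lset_def)
qed

lemma add_in_odd_Jstar_iff_image_add_in_Jstar:
  "a + b \<in> {s. odd s \<and> 2*s + 1 \<in> Jstar} \<longleftrightarrow> f a + f b \<in> Jstar"
proof (cases "even (a + b)")
  case True
  then show ?thesis using add_even even_in_Jset_notin_Jstar(2) by simp
next
  case False
  then show ?thesis using add_odd by simp
qed

end

theorem lemma2p2:
  fixes m k :: nat
  assumes "m \<ge> 1"
  shows "mu (first_m (UNIV :: nat set) m) k Jset = mu (first_m Pset m) k Lset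
       \<and> mu (first_m Pset m) k Jstar = mu (first_m Qset m) k Jstar"
proof -
  have N: "first_m UNIV m = {..<m}"
    using first_m_range_strict_mono[of id m] by (simp add: strict_mono_def)
  have P: "first_m Pset m = Pset_nth ` {..<m}"
    by (simp add: Pset_eq_range first_m_range_strict_mono strict_mono_Pset_nth)
  have Q: "first_m Qset m = Qset_nth ` {..<m}"
    by (simp add: Qset_eq_range first_m_range_strict_mono strict_mono_Qset_nth)
  have inj: "inj_on Pset_nth {..<m}" "inj_on Qset_nth {..<m}"
    using strict_mono_Pset_nth strict_mono_Qset_nth by (auto intro: strict_mono_imp_inj_on inj_on_subset)
  let ?T = "{s. odd s \<and> 2*s + 1 \<in> Jstar}"
  have "mu {..<m} k Jset = mu (Pset_nth ` {..<m}) k Lset"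
    by (rule mu_image_eq[OF finite_lessThan inj(1)],
        rule add_in_Jset_iff_image_add_in_Lset[OF Pset_nth_add_odd Pset_nth_add_even])
  moreover have "mu {..<m} k ?T = mu (Pset_nth ` {..<m}) k Jstar"
    by (rule mu_image_eq[OF finite_lessThan inj(1)],
        rule add_in_odd_Jstar_iff_image_add_in_Jstar[OF Pset_nth_add_odd Pset_nth_add_even])
  moreover have "mu {..<m} k ?T = mu (Qset_nth ` {..<m}) k Jstar"
    by (rule mu_image_eq[OF finite_lessThan inj(2)],
        rule add_in_odd_Jstar_iff_image_add_in_Jstar[OF Qset_nth_add_odd Qset_nth_add_even])
  ultimately show ?thesis using N P Q by simp
qed

end
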